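(* Let $q$ be a power of $2$ and $v\ge1$ an integer. In the affine space $AG(2v,q)$ over $\mathbb{F}_q$ let $K=\{(a_1,a_1^2,a_2,a_2^2,\dots,a_v,a_v^2): a_1,\dots,a_v\in\mathbb{F}_q\}$ and $A=AG(2v,q)\setminus K$. Then for every point $X\in A$, the number of lines of $AG(2v,q)$ through $X$ that are entirely contained in $A$ equals $B_{q,v}-q^v+\frac12(q-2)$, where $B_{q,v}=\frac{q^{2v}-1}{q-1}$.
   Context: Points of $AG(2v,q)$ are the vectors of $\mathbb{F}_q^{2v}$, and lines are the cosets of 1-dimensional subspaces; $B_{q,v}=(q^{2v}-1)/(q-1)$ is the number of lines through any point. *)

theory Defs
  imports Complex_Main
begin

definition ag_points :: "nat \<Rightarrow> 'a::field list set" where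
  "ag_points n = {x. length x = n}"

definition vadd :: "'a::field list \<Rightarrow> 'a list \<Rightarrow> 'a list" where
  "vadd x y = map2 (+) x y"

definition vscale :: "'a::field \<Rightarrow> 'a list \<Rightarrow> 'a list" where
  "vscale t x = map ((*) t) x"

definition ag_line :: "nat \<Rightarrow> 'a::field list set \<Rightarrow> bool" where
  "ag_line n L \<longleftrightarrow> (\<exists>p d. length p = n \<and> length d = n \<and> d \<noteq> replicate n 0 \<and>
      L = {vadd p (vscale t d) | t. True})"

text \<open>K = {(a1,a1^2,...,av,av^2)}, 0-indexed: coordinate 2i+1 is square of coordinate 2i.\<close>
definition setK :: "nat \<Rightarrow> 'a::field list set" where
  "setK v = {x. length x = 2*v \<and> (\<forall>i<v. x ! (2*i+1) = (x ! (2*i))^2)}"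

definition setA :: "nat \<Rightarrow> 'a::field list set" where
  "setA v = ag_points (2*v) - setK v"

end

theory Submission
  imports Defs
begin

(*
  Lines through X are counted via their direction vectors, each line having q - 1 of them.
  For a direction d with coordinates (f_i, e_i), the parameters t \<noteq> 0 with X + t d \<in> K are the
  common roots of the quadratics c_i + e_i t - f_i^2 t^2, where c_i = X_(2i+1) - X_(2i)^2
  (characteristic 2 turns the square of a sum into a sum of squares). As X \<notin> K some c_i \<noteq> 0,
  and Vieta's formulas show that such a direction meets K at most twice. Every point of K is hit
  from X by exactly q - 1 pairs (d, t), and every pair {t1, t2} of distinct nonzero parameters by
  exactly one direction, whose f_i is the (unique, by Frobenius) square root of c_i / (t1 t2).
  Inclusion-exclusion over directions then counts those missing K:
  q^(2v) - 1 - (q - 1) q^v + (q - 1 choose 2).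
*)

section \<open>Lines through a point and their directions\<close>

lemma length_vadd [simp]: "length (vadd x y) = min (length x) (length y)"
  by (simp add: vadd_def)

lemma nth_vadd [simp]: "j < length x \<Longrightarrow> j < length y \<Longrightarrow> vadd x y ! j = x ! j + y ! j"
  by (simp add: vadd_def)

lemma length_vscale [simp]: "length (vscale t x) = length x"
  by (simp add: vscale_def)

lemma nth_vscale [simp]: "j < length x \<Longrightarrow> vscale t x ! j = t * x ! j"
  by (simp add: vscale_def)

lemma vscale_vscale: "vscale a (vscale b d) = vscale (a * b) d"
  by (simp add: vscale_def)

lemma nonzero_vector_has_nonzero_entry:
  assumes "d \<noteq> replicate (length d) 0"
  obtains j where "j < length d" "d ! j \<noteq> 0"
  using assms by (metis in_set_conv_nth replicate_eqI)

lemma nth_equality_pairs: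
  assumes "length xs = 2 * v" "length ys = 2 * v"
    and "\<And>i. i < v \<Longrightarrow> xs ! (2 * i) = ys ! (2 * i)"
    and "\<And>i. i < v \<Longrightarrow> xs ! (2 * i + 1) = ys ! (2 * i + 1)"
  shows "xs = ys"
proof (rule nth_equalityI)
  fix j assume "j < length xs"
  then have "j div 2 < v" using assms(1) by simp
  moreover have "j = 2 * (j div 2) \<or> j = 2 * (j div 2) + 1" by auto
  ultimately show "xs ! j = ys ! j" using assms(3,4) by metis
qed (use assms in simp)

definition line_through :: "'a::field list \<Rightarrow> 'a list \<Rightarrow> 'a list set" where
  "line_through X d = {vadd X (vscale t d) | t. True}"

definition nonzero_vectors :: "nat \<Rightarrow> 'a::zero list set" where
  "nonzero_vectors n = {d. length d = n \<and> d \<noteq> replicate n 0}"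

lemma finite_nonzero_vectors: "finite (nonzero_vectors n :: 'a::{finite,zero} list set)"
  using finite_lists_length_eq[of "UNIV :: 'a set" n]
  by (rule finite_subset[rotated]) (auto simp: nonzero_vectors_def)

lemma card_nonzero_vectors:
  "card (nonzero_vectors n :: 'a::{finite,zero} list set) = card (UNIV :: 'a set) ^ n - 1"
proof -
  have "nonzero_vectors n = {d :: 'a list. length d = n} - {replicate n 0}"
    by (auto simp: nonzero_vectors_def)
  moreover have "card {d :: 'a list. length d = n} = card (UNIV :: 'a set) ^ n"
    using card_lists_length_eq[of "UNIV :: 'a set" n] by simp
  ultimately show ?thesis
    using finite_lists_length_eq[of "UNIV :: 'a set" n] by simp
qed

lemma ag_line_through_iff:
  assumes "length X = n"
  shows "ag_line n L \<and> X \<in> L \<longleftrightarrow> (\<exists>d \<in> nonzero_vectors n. L = line_through X d)"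
proof
  assume "ag_line n L \<and> X \<in> L"
  then obtain p d t0 where d: "d \<in> nonzero_vectors n" and L: "L = line_through p d"
    and "length p = n" and X: "X = vadd p (vscale t0 d)"
    by (auto simp: ag_line_def line_through_def nonzero_vectors_def)
  have "vadd p (vscale t d) = vadd X (vscale (t - t0) d)" for t
    using d \<open>length p = n\<close> by (intro nth_equalityI) (auto simp: X nonzero_vectors_def algebra_simps)
  then have "line_through p d = line_through X d"
    unfolding line_through_def by (metis (no_types, opaque_lifting) add_diff_cancel)
  with d L show "\<exists>d \<in> nonzero_vectors n. L = line_through X d" by blast
next
  assume "\<exists>d \<in> nonzero_vectors n. L = line_through X d"
  then obtain d where d: "d \<in> nonzero_vectors n" and L: "L = line_through X d" by blast
  have "vadd X (vscale 0 d) = X"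
    using d assms by (intro nth_equalityI) (auto simp: nonzero_vectors_def)
  then have "X \<in> L" unfolding L line_through_def by (metis (mono_tags, lifting) mem_Collect_eq)
  with d assms show "ag_line n L \<and> X \<in> L"
    by (auto simp: ag_line_def L line_through_def nonzero_vectors_def)
qed

lemma line_through_vscale:
  assumes "c \<noteq> 0"
  shows "line_through X (vscale c d) = line_through X d"
proof -
  have "vadd X (vscale t (vscale c d)) = vadd X (vscale (t * c) d)" for t
    by (simp add: vscale_vscale mult.commute)
  moreover have "vadd X (vscale t d) = vadd X (vscale (t / c) (vscale c d))" for t
    using assms by (simp add: vscale_vscale)
  ultimately show ?thesis
    unfolding line_through_def by blast
qed

lemma line_through_eq_imp_vscale:
  assumes "length d = length X" "length d' = length X" "d' \<noteq> replicate (length X) 0"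
    and "line_through X d' = line_through X d"
  obtains c where "c \<noteq> 0" "d' = vscale c d"
proof -
  have "vadd X (vscale 1 d') \<in> line_through X d"
    using assms(4) unfolding line_through_def by blast
  then obtain c where c: "vadd X (vscale 1 d') = vadd X (vscale c d)"
    unfolding line_through_def by blast
  have "d' = vscale c d"
  proof (rule nth_equalityI)
    fix j assume "j < length d'"
    with assms(1,2) show "d' ! j = vscale c d ! j"
      using arg_cong[OF c, of "\<lambda>x. x ! j"] by simp
  qed (use assms in simp)
  moreover have "c \<noteq> 0"
    using assms(3) \<open>d' = vscale c d\<close> assms(2)
    by (auto simp: vscale_def intro!: replicate_eqI)
  ultimately show thesis using that by blast
qed

lemma card_directions_of_line:
  fixes X :: "'a::{finite,field} list"
  assumes "length X = n" and d: "d \<in> nonzero_vectors n"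
  shows "card {d' \<in> nonzero_vectors n. line_through X d' = line_through X d}
       = card (UNIV :: 'a set) - 1"
proof -
  obtain j where j: "j < length d" "d ! j \<noteq> 0"
    using d by (auto simp: nonzero_vectors_def elim: nonzero_vector_has_nonzero_entry)
  have "{d' \<in> nonzero_vectors n. line_through X d' = line_through X d}
      = (\<lambda>c. vscale c d) ` (UNIV - {0})"
  proof (intro equalityI subsetI)
    fix d' assume "d' \<in> {d' \<in> nonzero_vectors n. line_through X d' = line_through X d}"
    then obtain c where "c \<noteq> 0" "d' = vscale c d"
      using d assms(1) by (auto simp: nonzero_vectors_def elim: line_through_eq_imp_vscale)
    then show "d' \<in> (\<lambda>c. vscale c d) ` (UNIV - {0})" by blast
  next
    fix d' assume "d' \<in> (\<lambda>c. vscale c d) ` (UNIV - {0})"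
    then obtain c where c: "c \<noteq> 0" "d' = vscale c d" by blast
    then have "d' ! j \<noteq> 0" using j by simp
    then have "d' \<noteq> replicate n 0" using j(1) d by (auto simp: nonzero_vectors_def)
    with c d show "d' \<in> {d' \<in> nonzero_vectors n. line_through X d' = line_through X d}"
      by (auto simp: nonzero_vectors_def line_through_vscale)
  qed
  moreover have "inj (\<lambda>c. vscale c d)"
  proof (rule injI)
    fix a b assume "vscale a d = vscale b d"
    then have "a * d ! j = b * d ! j" using j(1) by (metis nth_vscale)
    then show "a = b" using j(2) by simp
  qed
  ultimately show ?thesis
    by (simp add: card_image inj_on_subset card_Diff_singleton)
qed

lemma card_directions_of_lines:
  fixes X :: "'a::{finite,field} list"
  assumes "length X = n"
  shows "card {d \<in> nonzero_vectors n. P (line_through X d)}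
       = (card (UNIV :: 'a set) - 1) * card {L. ag_line n L \<and> X \<in> L \<and> P L}"
proof -
  define D where "D = {d \<in> nonzero_vectors n. P (line_through X d)}"
  have lines: "{L. ag_line n L \<and> X \<in> L \<and> P L} = line_through X ` D"
  proof (intro equalityI subsetI)
    fix L assume "L \<in> {L. ag_line n L \<and> X \<in> L \<and> P L}"
    then obtain d where "d \<in> nonzero_vectors n" "L = line_through X d" "P L"
      using ag_line_through_iff[OF assms, of L] by auto
    then show "L \<in> line_through X ` D" by (auto simp: D_def)
  next
    fix L assume "L \<in> line_through X ` D"
    then show "L \<in> {L. ag_line n L \<and> X \<in> L \<and> P L}"
      using ag_line_through_iff[OF assms, of L] by (auto simp: D_def)
  qed
  have fiber: "card {d' \<in> D. line_through X d' = L} = card (UNIV :: 'a set) - 1"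
    if L: "L \<in> line_through X ` D" for L
  proof -
    obtain d where d: "d \<in> D" "L = line_through X d" using L by blast
    then have "{d' \<in> D. line_through X d' = L}
        = {d' \<in> nonzero_vectors n. line_through X d' = line_through X d}"
      by (auto simp: D_def)
    with d show ?thesis
      using card_directions_of_line[OF assms] by (simp add: D_def)
  qed
  have "finite D"
    unfolding D_def by (rule finite_subset[OF _ finite_nonzero_vectors]) auto
  then have "card D = (\<Sum>L \<in> line_through X ` D. card {d' \<in> D. line_through X d' = L})"
    using sum.image_gen[of D "\<lambda>_. 1 :: nat" "line_through X"] by simp
  also have "\<dots> = (card (UNIV :: 'a set) - 1) * card (line_through X ` D)"
    by (simp add: fiber)
  finally show ?thesis
    by (simp add: D_def lines)
qed

section \<open>Characteristic two and counting\<close>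

lemma char2_power2_diff:
  fixes a b :: "'a::comm_ring_1"
  assumes "(2::'a) = 0"
  shows "(a - b) ^ 2 = a ^ 2 - b ^ 2"
proof -
  have "(a - b) ^ 2 = a ^ 2 - b ^ 2 + 2 * (b ^ 2 - a * b)"
    by (simp add: power2_eq_square algebra_simps)
  with assms show ?thesis by simp
qed

lemma char2_power2_add:
  fixes a b :: "'a::comm_ring_1"
  assumes "(2::'a) = 0"
  shows "(a + b) ^ 2 = a ^ 2 + b ^ 2"
proof -
  have "(a + b) ^ 2 = a ^ 2 + b ^ 2 + 2 * (a * b)"
    by (simp add: power2_eq_square algebra_simps)
  with assms show ?thesis by simp
qed

lemma char2_power2_inj:
  fixes a b :: "'a::idom"
  assumes "(2::'a) = 0" "a ^ 2 = b ^ 2"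
  shows "a = b"
  using char2_power2_diff[OF assms(1), of a b] assms(2) by simp

lemma char2_finite_exists_sqrt:
  fixes y :: "'a::{finite,idom}"
  assumes "(2::'a) = 0"
  obtains s where "s ^ 2 = y"
proof -
  have "inj (\<lambda>x::'a. x ^ 2)"
    using char2_power2_inj[OF assms] by (auto intro: injI)
  then have "surj (\<lambda>x::'a. x ^ 2)"
    by (simp add: finite_UNIV_inj_surj)
  then show thesis using that by (metis surjD)
qed

lemma two_roots_iff_vieta:
  fixes t1 t2 c e F :: "'a::idom"
  assumes "t1 \<noteq> t2"
  shows "(c + t1 * e - t1 ^ 2 * F = 0 \<and> c + t2 * e - t2 ^ 2 * F = 0)
     \<longleftrightarrow> (e = (t1 + t2) * F \<and> c + t1 * t2 * F = 0)"
proof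
  assume roots: "c + t1 * e - t1 ^ 2 * F = 0 \<and> c + t2 * e - t2 ^ 2 * F = 0"
  have "(t1 - t2) * (e - (t1 + t2) * F) = (c + t1 * e - t1 ^ 2 * F) - (c + t2 * e - t2 ^ 2 * F)"
    by (simp add: power2_eq_square algebra_simps)
  with roots assms have e: "e = (t1 + t2) * F" by simp
  have "c + t1 * t2 * F = c + t1 * e - t1 ^ 2 * F"
    by (simp add: e power2_eq_square algebra_simps)
  with roots e show "e = (t1 + t2) * F \<and> c + t1 * t2 * F = 0" by simp
next
  assume "e = (t1 + t2) * F \<and> c + t1 * t2 * F = 0"
  then show "c + t1 * e - t1 ^ 2 * F = 0 \<and> c + t2 * e - t2 ^ 2 * F = 0"
    by (simp add: power2_eq_square algebra_simps)
qed

lemma card_Collect_ex1: "\<exists>!x. Q x \<Longrightarrow> card {x. Q x} = 1"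
  by (auto simp: card_1_singleton_iff elim!: ex1E)

lemma of_bool_nonzero_plus_choose_2:
  fixes n :: nat
  assumes "n \<le> 2"
  shows "of_bool (n \<noteq> 0) + (n choose 2) = n"
proof -
  have "n = 0 \<or> n = 1 \<or> n = 2" using assms by auto
  then show ?thesis by auto
qed

lemma real_choose_2: "real (n choose 2) = real n * (real n - 1) / 2"
  by (induction n) (auto simp: numeral_2_eq_2 field_simps)

section \<open>Directions meeting the set K\<close>

definition parabola_defect :: "'a::field list \<Rightarrow> nat \<Rightarrow> 'a" where
  "parabola_defect X i = X ! (2 * i + 1) - (X ! (2 * i)) ^ 2"

definition K_hits :: "nat \<Rightarrow> 'a::field list \<Rightarrow> 'a list \<Rightarrow> 'a set" where
  "K_hits v X d = {t. t \<noteq> 0 \<and> vadd X (vscale t d) \<in> setK v}"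

lemma card_setK: "card (setK v :: 'a::{finite,field} list set) = card (UNIV :: 'a set) ^ v"
proof -
  define lift :: "'a list \<Rightarrow> 'a list" where
    "lift a = map (\<lambda>j. if even j then a ! (j div 2) else (a ! (j div 2)) ^ 2) [0..<2 * v]" for a
  have "inj_on lift {a. length a = v}"
  proof (rule inj_onI)
    fix a b :: "'a list"
    assume ab: "a \<in> {a. length a = v}" "b \<in> {a. length a = v}" "lift a = lift b"
    show "a = b"
    proof (rule nth_equalityI)
      fix i assume "i < length a"
      then show "a ! i = b ! i"
        using ab arg_cong[OF ab(3), of "\<lambda>x. x ! (2 * i)"] by (simp add: lift_def)
    qed (use ab in simp)
  qed
  moreover have "setK v = lift ` {a. length a = v}"
  proof (intro equalityI subsetI)
    fix x :: "'a list" assume x: "x \<in> setK v"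
    have "x = lift (map (\<lambda>i. x ! (2 * i)) [0..<v])"
      using x by (intro nth_equality_pairs) (auto simp: lift_def setK_def)
    then show "x \<in> lift ` {a. length a = v}" by auto
  qed (auto simp: lift_def setK_def)
  ultimately show ?thesis
    using card_lists_length_eq[of "UNIV :: 'a set" v] by (simp add: card_image)
qed

lemma setK_iff_parabola_defect:
  "length X = 2 * v \<Longrightarrow> X \<in> setK v \<longleftrightarrow> (\<forall>i<v. parabola_defect X i = 0)"
  by (simp add: setK_def parabola_defect_def)

lemma vadd_vscale_in_setK_iff:
  fixes X d :: "'a::field list"
  assumes "(2::'a) = 0" "length X = 2 * v" "length d = 2 * v"
  shows "vadd X (vscale t d) \<in> setK v
     \<longleftrightarrow> (\<forall>i<v. parabola_defect X i + t * d ! (2 * i + 1) - t ^ 2 * (d ! (2 * i)) ^ 2 = 0)"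
proof -
  have "(X ! (2 * i) + t * d ! (2 * i)) ^ 2 = (X ! (2 * i)) ^ 2 + t ^ 2 * (d ! (2 * i)) ^ 2" for i
    using char2_power2_add[OF assms(1)] by (simp add: power_mult_distrib)
  with assms(2,3) show ?thesis
    by (auto simp: setK_def parabola_defect_def algebra_simps)
qed

lemma two_K_hits_iff:
  fixes X d :: "'a::field list"
  assumes "(2::'a) = 0" "length X = 2 * v" "length d = 2 * v" "t1 \<noteq> t2"
  shows "t1 \<in> K_hits v X d \<and> t2 \<in> K_hits v X d \<longleftrightarrow> t1 \<noteq> 0 \<and> t2 \<noteq> 0 \<and>
     (\<forall>i<v. d ! (2 * i + 1) = (t1 + t2) * (d ! (2 * i)) ^ 2
            \<and> parabola_defect X i + t1 * t2 * (d ! (2 * i)) ^ 2 = 0)"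
proof -
  have "t1 \<in> K_hits v X d \<and> t2 \<in> K_hits v X d \<longleftrightarrow> t1 \<noteq> 0 \<and> t2 \<noteq> 0 \<and>
     (\<forall>i<v. parabola_defect X i + t1 * d ! (2 * i + 1) - t1 ^ 2 * (d ! (2 * i)) ^ 2 = 0
          \<and> parabola_defect X i + t2 * d ! (2 * i + 1) - t2 ^ 2 * (d ! (2 * i)) ^ 2 = 0)"
    unfolding K_hits_def using vadd_vscale_in_setK_iff[OF assms(1-3)] by auto
  also have "\<dots> \<longleftrightarrow> t1 \<noteq> 0 \<and> t2 \<noteq> 0 \<and>
     (\<forall>i<v. d ! (2 * i + 1) = (t1 + t2) * (d ! (2 * i)) ^ 2
            \<and> parabola_defect X i + t1 * t2 * (d ! (2 * i)) ^ 2 = 0)"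
    using two_roots_iff_vieta[OF assms(4)] by simp
  finally show ?thesis .
qed

context
  fixes v :: nat and X :: "'a::{finite,field} list"
  assumes char2: "(2::'a) = 0" and length_X: "length X = 2 * v" and X_notin_K: "X \<notin> setK v"
begin

lemma exists_parabola_defect_nonzero: obtains i where "i < v" "parabola_defect X i \<noteq> 0"
  using X_notin_K setK_iff_parabola_defect[OF length_X] by blast

lemma K_hits_no_three:
  assumes d: "length d = 2 * v"
    and hits: "t1 \<in> K_hits v X d" "t2 \<in> K_hits v X d" "t3 \<in> K_hits v X d"
    and "t1 \<noteq> t2" "t1 \<noteq> t3"
  shows "t2 = t3"
proof (rule ccontr)
  assume "t2 \<noteq> t3"
  obtain i where i: "i < v" "parabola_defect X i \<noteq> 0"
    by (rule exists_parabola_defect_nonzero)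
  let ?c = "parabola_defect X i" and ?F = "(d ! (2 * i)) ^ 2"
  have "t1 \<noteq> 0" "?c + t1 * t2 * ?F = 0" "?c + t1 * t3 * ?F = 0"
    using two_K_hits_iff[OF char2 length_X d \<open>t1 \<noteq> t2\<close>]
      two_K_hits_iff[OF char2 length_X d \<open>t1 \<noteq> t3\<close>] hits i(1) by auto
  moreover have "t1 * (t2 - t3) * ?F = (?c + t1 * t2 * ?F) - (?c + t1 * t3 * ?F)"
    by (simp add: algebra_simps)
  ultimately have "?F = 0" using \<open>t2 \<noteq> t3\<close> by simp
  with \<open>?c + t1 * t2 * ?F = 0\<close> i(2) show False by simp
qed

lemma card_K_hits_le_2:
  assumes "length d = 2 * v"
  shows "card (K_hits v X d) \<le> 2"
proof (cases "\<exists>t1 \<in> K_hits v X d. \<exists>t2 \<in> K_hits v X d. t1 \<noteq> t2")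
  case True
  then obtain t1 t2 where t: "t1 \<in> K_hits v X d" "t2 \<in> K_hits v X d" "t1 \<noteq> t2" by blast
  have "K_hits v X d \<subseteq> {t1, t2}"
    using K_hits_no_three[OF assms t(1,2)] t(3) by blast
  then have "card (K_hits v X d) \<le> card {t1, t2}" by (intro card_mono) auto
  then show ?thesis using t(3) by simp
next
  case False
  then have "card (K_hits v X d) \<le> Suc 0" by (simp add: card_le_Suc0_iff_eq)
  then show ?thesis by simp
qed

lemma card_directions_hitting_K_at:
  assumes "t \<noteq> 0"
  shows "card {d \<in> nonzero_vectors (2 * v). vadd X (vscale t d) \<in> setK v} = card (setK v :: 'a list set)"
proof -
  let ?f = "\<lambda>d. vadd X (vscale t d)" and ?g = "\<lambda>k. vscale (inverse t) (vadd k (vscale (-1) X))"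
  have f_g: "?f (?g k) = k" if "k \<in> setK v" for k
    using assms length_X that by (auto intro!: nth_equalityI simp: setK_def field_simps)
  have "bij_betw ?f {d \<in> nonzero_vectors (2 * v). ?f d \<in> setK v} (setK v)"
  proof (rule bij_betw_byWitness[where f' = ?g])
    show "\<forall>d \<in> {d \<in> nonzero_vectors (2 * v). ?f d \<in> setK v}. ?g (?f d) = d"
      using assms length_X by (auto intro!: nth_equalityI simp: nonzero_vectors_def field_simps)
    show "\<forall>k \<in> setK v. ?f (?g k) = k"
      using f_g by blast
    show "?f ` {d \<in> nonzero_vectors (2 * v). ?f d \<in> setK v} \<subseteq> setK v" by blast
    show "?g ` setK v \<subseteq> {d \<in> nonzero_vectors (2 * v). ?f d \<in> setK v}"
    proof (rule image_subsetI)
      fix k :: "'a list" assume k: "k \<in> setK v"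
      have "?g k \<noteq> replicate (2 * v) 0"
      proof
        assume "?g k = replicate (2 * v) 0"
        then have "?f (?g k) = X"
          using length_X by (auto intro!: nth_equalityI)
        with f_g[OF k] k X_notin_K show False by simp
      qed
      then show "?g k \<in> {d \<in> nonzero_vectors (2 * v). ?f d \<in> setK v}"
        using f_g[OF k] k length_X by (auto simp: nonzero_vectors_def setK_def)
    qed
  qed
  then show ?thesis by (rule bij_betw_same_card)
qed

lemma sum_card_K_hits:
  "(\<Sum>d \<in> nonzero_vectors (2 * v). card (K_hits v X d))
     = (card (UNIV :: 'a set) - 1) * card (UNIV :: 'a set) ^ v"
proof -
  have "K_hits v X d = {t \<in> UNIV - {0}. vadd X (vscale t d) \<in> setK v}" for d
    by (auto simp: K_hits_def)
  moreover have "(\<Sum>d \<in> nonzero_vectors (2 * v). card {t \<in> UNIV - {0}. vadd X (vscale t d) \<in> setK v})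
      = (\<Sum>t \<in> UNIV - {0::'a}. card (setK v :: 'a list set))"
    by (rule sum_multicount_gen[where R = "\<lambda>d t. vadd X (vscale t d) \<in> setK v"])
      (auto simp: finite_nonzero_vectors card_directions_hitting_K_at)
  ultimately have "(\<Sum>d \<in> nonzero_vectors (2 * v). card (K_hits v X d))
      = (\<Sum>t \<in> UNIV - {0::'a}. card (setK v :: 'a list set))"
    by simp
  then show ?thesis
    by (simp add: card_setK card_Diff_singleton)
qed

lemma two_K_hits_iff_squares:
  assumes t: "t1 \<noteq> 0" "t2 \<noteq> 0" "t1 \<noteq> t2" and d: "length d = 2 * v"
  shows "t1 \<in> K_hits v X d \<and> t2 \<in> K_hits v X d \<longleftrightarrow>
    (\<forall>i<v. d ! (2 * i + 1) = (t1 + t2) * (d ! (2 * i)) ^ 2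
           \<and> (d ! (2 * i)) ^ 2 = - parabola_defect X i / (t1 * t2))"
proof -
  have "c + t1 * t2 * F = 0 \<longleftrightarrow> F = - c / (t1 * t2)" for c F
    using t(1,2) by (auto simp: field_simps eq_neg_iff_add_eq_0)
  then show ?thesis
    using two_K_hits_iff[OF char2 length_X d t(3)] t(1,2) by simp
qed

lemma ex1_direction_K_hits:
  assumes t: "t1 \<noteq> 0" "t2 \<noteq> 0" "t1 \<noteq> t2"
  shows "\<exists>!d. d \<in> nonzero_vectors (2 * v) \<and> t1 \<in> K_hits v X d \<and> t2 \<in> K_hits v X d"
proof -
  let ?hits = "\<lambda>d. t1 \<in> K_hits v X d \<and> t2 \<in> K_hits v X d"
  note hits_iff = two_K_hits_iff_squares[OF t]
  have "\<forall>i. \<exists>r. r ^ 2 = - parabola_defect X i / (t1 * t2)"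
    using char2_finite_exists_sqrt[OF char2] by blast
  then obtain s where s: "\<And>i. (s i) ^ 2 = - parabola_defect X i / (t1 * t2)"
    by metis
  define d where "d = map (\<lambda>j. if even j then s (j div 2) else (t1 + t2) * (s (j div 2)) ^ 2) [0..<2 * v]"
  have d: "length d = 2 * v" "\<And>i. i < v \<Longrightarrow> d ! (2 * i) = s i"
    "\<And>i. i < v \<Longrightarrow> d ! (2 * i + 1) = (t1 + t2) * (s i) ^ 2"
    by (simp_all add: d_def)
  obtain i where i: "i < v" "parabola_defect X i \<noteq> 0"
    by (rule exists_parabola_defect_nonzero)
  have "d ! (2 * i) \<noteq> 0"
    using s[of i] d(2)[OF i(1)] i(2) t(1,2) by auto
  then have d_nonzero: "d \<in> nonzero_vectors (2 * v)"
    using d(1) i(1) by (auto simp: nonzero_vectors_def)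
  have d_hits: "?hits d"
    using hits_iff[OF d(1)] d(2,3) s by simp
  have unique: "d' = d" if d'_hits: "d' \<in> nonzero_vectors (2 * v) \<and> ?hits d'" for d'
  proof -
    have d': "length d' = 2 * v" using d'_hits by (simp add: nonzero_vectors_def)
    have even: "d' ! (2 * i) = d ! (2 * i)" if "i < v" for i
      using hits_iff[OF d'] d'_hits d(2) s that by (auto intro: char2_power2_inj[OF char2])
    have odd: "d' ! (2 * i + 1) = d ! (2 * i + 1)" if "i < v" for i
      using hits_iff[OF d'] d'_hits d(3) s that by auto
    show "d' = d"
      by (rule nth_equality_pairs[OF d' d(1) even odd])
  qed
  show ?thesis
  proof (rule ex1I)
    show "d \<in> nonzero_vectors (2 * v) \<and> ?hits d" using d_nonzero d_hits by blast
  qed (rule unique)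
qed

lemma sum_card_K_hits_choose_2:
  "(\<Sum>d \<in> nonzero_vectors (2 * v). card (K_hits v X d) choose 2)
     = (card (UNIV :: 'a set) - 1) choose 2"
proof -
  let ?pairs = "{P. P \<subseteq> UNIV - {0::'a} \<and> card P = 2}"
  have "card (K_hits v X d) choose 2 = card {P \<in> ?pairs. P \<subseteq> K_hits v X d}" for d
  proof -
    have "{P \<in> ?pairs. P \<subseteq> K_hits v X d} = {P. P \<subseteq> K_hits v X d \<and> card P = 2}"
      by (auto simp: K_hits_def)
    then show ?thesis by (simp add: n_subsets)
  qed
  moreover have "card {d \<in> nonzero_vectors (2 * v). P \<subseteq> K_hits v X d} = 1" if "P \<in> ?pairs" for P
  proof -
    obtain t1 t2 where P: "P = {t1, t2}" "t1 \<noteq> t2" "t1 \<noteq> 0" "t2 \<noteq> 0"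
      using \<open>P \<in> ?pairs\<close> by (auto simp: card_2_iff)
    show ?thesis
      using card_Collect_ex1[OF ex1_direction_K_hits[OF P(3,4,2)]] by (simp add: P)
  qed
  moreover have "(\<Sum>d \<in> nonzero_vectors (2 * v). card {P \<in> ?pairs. P \<subseteq> K_hits v X d})
      = 1 * card ?pairs"
    by (rule sum_multicount) (use calculation in \<open>auto simp: finite_nonzero_vectors\<close>)
  ultimately have "(\<Sum>d \<in> nonzero_vectors (2 * v). card (K_hits v X d) choose 2) = card ?pairs"
    by simp
  then show ?thesis
    by (simp add: n_subsets card_Diff_singleton)
qed

lemma line_through_subset_setA_iff:
  assumes "length d = 2 * v"
  shows "line_through X d \<subseteq> setA v \<longleftrightarrow> K_hits v X d = {}"
proof -
  have "vadd X (vscale 0 d) = X"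
    using assms length_X by (intro nth_equalityI) auto
  then have "line_through X d \<inter> setK v = (\<lambda>t. vadd X (vscale t d)) ` K_hits v X d"
    using X_notin_K by (auto simp: line_through_def K_hits_def)
  moreover have "line_through X d \<subseteq> ag_points (2 * v)"
    using assms length_X by (auto simp: line_through_def ag_points_def)
  ultimately show ?thesis
    by (auto simp: setA_def)
qed

lemma card_directions_avoiding_K:
  "card {d \<in> nonzero_vectors (2 * v). K_hits v X d = {}}
     + (card (UNIV :: 'a set) - 1) * card (UNIV :: 'a set) ^ v
   = card (UNIV :: 'a set) ^ (2 * v) - 1 + ((card (UNIV :: 'a set) - 1) choose 2)"
proof -
  let ?D = "nonzero_vectors (2 * v) :: 'a list set"
  have "card {d \<in> ?D. K_hits v X d \<noteq> {}} + ((card (UNIV :: 'a set) - 1) choose 2)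
      = (\<Sum>d \<in> ?D. of_bool (card (K_hits v X d) \<noteq> 0) + (card (K_hits v X d) choose 2))"
    using finite_nonzero_vectors[where 'a = 'a]
    by (simp add: sum.distrib sum_card_K_hits_choose_2 Int_def)
  also have "\<dots> = (\<Sum>d \<in> ?D. card (K_hits v X d))"
    using card_K_hits_le_2 by (intro sum.cong of_bool_nonzero_plus_choose_2) (auto simp: nonzero_vectors_def)
  finally have "card {d \<in> ?D. K_hits v X d \<noteq> {}} + ((card (UNIV :: 'a set) - 1) choose 2)
      = (card (UNIV :: 'a set) - 1) * card (UNIV :: 'a set) ^ v"
    by (simp add: sum_card_K_hits)
  moreover have "card {d \<in> ?D. K_hits v X d = {}} + card {d \<in> ?D. K_hits v X d \<noteq> {}}
      = card (UNIV :: 'a set) ^ (2 * v) - 1"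
  proof -
    have "card ?D = card ({d \<in> ?D. K_hits v X d = {}} \<union> {d \<in> ?D. K_hits v X d \<noteq> {}})"
      by (rule arg_cong[where f = card]) blast
    also have "\<dots> = card {d \<in> ?D. K_hits v X d = {}} + card {d \<in> ?D. K_hits v X d \<noteq> {}}"
      using finite_nonzero_vectors[where 'a = 'a] by (intro card_Un_disjoint) auto
    finally show ?thesis by (simp add: card_nonzero_vectors)
  qed
  ultimately show ?thesis by linarith
qed

end

theorem proposition12:
  fixes v q :: nat and X :: "'a::{finite,field} list"
  assumes "CHAR('a) = 2"
    and "q = card (UNIV :: 'a set)"
    and "v \<ge> 1"
    and "X \<in> setA v"
  shows "real (card {L :: 'a list set. ag_line (2*v) L \<and> X \<in> L \<and> L \<subseteq> setA v})
       = (real q ^ (2*v) - 1) / (real q - 1) - real q ^ v + (real q - 2) / 2"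
proof -
  have char2: "(2::'a) = 0"
    using of_nat_CHAR[where 'a = 'a] assms(1) by simp
  have X: "length X = 2 * v" "X \<notin> setK v"
    using assms(4) by (auto simp: setA_def ag_points_def)
  have "card {0::'a, 1} \<le> q"
    unfolding assms(2) by (intro card_mono) auto
  then have q: "q \<ge> 2" by simp
  let ?N = "card {L :: 'a list set. ag_line (2*v) L \<and> X \<in> L \<and> L \<subseteq> setA v}"
  have "{d \<in> nonzero_vectors (2 * v). line_through X d \<subseteq> setA v}
      = {d \<in> nonzero_vectors (2 * v). K_hits v X d = {}}"
    using line_through_subset_setA_iff[OF char2 X] by (auto simp: nonzero_vectors_def)
  then have "(q - 1) * ?N + (q - 1) * q ^ v = q ^ (2 * v) - 1 + ((q - 1) choose 2)"
    using card_directions_of_lines[OF X(1), of "\<lambda>L. L \<subseteq> setA v"]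
      card_directions_avoiding_K[OF char2 X] assms(2) by simp
  then have "real ((q - 1) * ?N + (q - 1) * q ^ v) = real (q ^ (2 * v) - 1 + ((q - 1) choose 2))"
    by (rule arg_cong)
  moreover have "real (q - 1) = real q - 1" "real (q ^ (2 * v) - 1) = real q ^ (2 * v) - 1"
    using q by simp_all
  ultimately have "(real q - 1) * ?N + (real q - 1) * real q ^ v
      = real q ^ (2 * v) - 1 + (real q - 1) * (real q - 1 - 1) / 2"
    by (simp only: of_nat_add of_nat_mult of_nat_power real_choose_2)
  then show ?thesis
    using q by (simp add: field_simps)
qed

end
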